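(* Let $L$ be a compact convex subset of $\mathbb{R}^n$, and let $Q$ be a polytope in $\mathbb{R}^n$ having at most $n$ vertices. If for every unit vector $u$ the projection $L_u$ contains a translate of $Q_u$, then $L$ contains a translate of $Q$.
   Context: For a unit vector $u$ and a set $S\subseteq\mathbb{R}^n$, $S_u$ denotes the orthogonal projection of $S$ onto the hyperplane $u^\perp$. *)

theory Defs
  imports "HOL-Analysis.Analysis"
begin

definition proj_hyp :: "'a::euclidean_space \<Rightarrow> 'a set \<Rightarrow> 'a set" where
  "proj_hyp u S = (\<lambda>x. x - (x \<bullet> u) *\<^sub>R u) ` S"

end

theory Submission
  imports Defs
begin

text \<open>
  With V the vertices of Q, a translate x + Q lies in L iff x lies in every L - v, v \<in> V; the
  hypothesis says that for each direction u some line parallel to u meets all these sets. At most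
  DIM('a) compact convex sets with this property have a common point. Otherwise let x minimise the
  sum of squared distances to the sets, with nearest points p v. Minimality makes x the centroid
  of the p v, so the vectors w v = x - p v sum to 0 and span a proper subspace. A line meeting all
  sets in a direction u orthogonal to that subspace gives points y v with \<Sum> w v \<bullet> y v = 0,
  while the supporting half-spaces w v \<bullet> y v \<le> w v \<bullet> p v sum to - \<Sum> norm (w v) ^ 2 < 0.
\<close>

lemma sum_norm_diff_square_centroid:
  fixes p :: "'b \<Rightarrow> 'a::real_inner"
  assumes "(\<Sum>v\<in>V. c - p v) = 0"
  shows "(\<Sum>v\<in>V. (norm (x - p v))\<^sup>2) = real (card V) * (norm (x - c))\<^sup>2 + (\<Sum>v\<in>V. (norm (c - p v))\<^sup>2)"
proof -
  have "(norm (x - p v))\<^sup>2 = (norm (x - c))\<^sup>2 + 2 * ((x - c) \<bullet> (c - p v)) + (norm (c - p v))\<^sup>2" for v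
    by (simp add: power2_norm_eq_inner algebra_simps inner_commute)
  then have "(\<Sum>v\<in>V. (norm (x - p v))\<^sup>2)
      = real (card V) * (norm (x - c))\<^sup>2 + 2 * ((x - c) \<bullet> (\<Sum>v\<in>V. c - p v)) + (\<Sum>v\<in>V. (norm (c - p v))\<^sup>2)"
    by (simp add: sum.distrib inner_sum_right sum_distrib_left)
  with assms show ?thesis by simp
qed

lemma nearest_points_balanced:
  fixes A :: "'b \<Rightarrow> 'a::euclidean_space set"
  assumes "finite V" "V \<noteq> {}"
    and compact: "\<And>v. v \<in> V \<Longrightarrow> compact (A v)" and nonempty: "\<And>v. v \<in> V \<Longrightarrow> A v \<noteq> {}"
  obtains x p where "\<And>v. v \<in> V \<Longrightarrow> p v \<in> A v"
    and "\<And>v y. v \<in> V \<Longrightarrow> y \<in> A v \<Longrightarrow> dist x (p v) \<le> dist x y"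
    and "(\<Sum>v\<in>V. x - p v) = 0"
proof -
  define g where "g x = (\<Sum>v\<in>V. (infdist x (A v))\<^sup>2)" for x
  define K where "K = convex hull (\<Union>v\<in>V. A v)"
  have "compact K"
    unfolding K_def using assms by (intro compact_convex_hull compact_UN) auto
  moreover have "K \<noteq> {}" unfolding K_def using assms by auto
  moreover have "continuous_on K g" unfolding g_def by (intro continuous_intros)
  ultimately obtain x where x_min: "\<And>y. y \<in> K \<Longrightarrow> g x \<le> g y"
    using continuous_attains_inf by metis
  have "\<forall>v\<in>V. \<exists>q\<in>A v. infdist x (A v) = dist x q"
    using compact nonempty by (metis compact_imp_closed infdist_attains_inf)
  then obtain p where p: "\<And>v. v \<in> V \<Longrightarrow> p v \<in> A v"
    and p_dist: "\<And>v. v \<in> V \<Longrightarrow> infdist x (A v) = dist x (p v)"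
    by metis
  have nearest: "dist x (p v) \<le> dist x y" if "v \<in> V" "y \<in> A v" for v y
    using p_dist[OF that(1)] infdist_le[OF that(2), of x] by simp
  \<comment> \<open>The centroid c of the nearest points lies in K, so comparing g x with g c forces x = c.\<close>
  define c where "c = (1 / real (card V)) *\<^sub>R (\<Sum>v\<in>V. p v)"
  have card_pos: "card V > 0" using assms by (simp add: card_gt_0_iff)
  have c_balanced: "(\<Sum>v\<in>V. c - p v) = 0"
    using card_pos unfolding c_def by (simp add: sum_subtractf sum_constant_scaleR)
  have "c \<in> K"
    unfolding c_def K_def scaleR_sum_right using assms p card_pos
    by (intro convex_sum) (auto intro!: hull_inc)
  then have "g x \<le> g c" by (rule x_min)
  also have "\<dots> \<le> (\<Sum>v\<in>V. (norm (c - p v))\<^sup>2)"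
    unfolding g_def using p
    by (intro sum_mono power_mono) (auto simp: infdist_nonneg dist_norm[symmetric] infdist_le)
  finally have "real (card V) * (norm (x - c))\<^sup>2 \<le> 0"
    using sum_norm_diff_square_centroid[OF c_balanced, of x] p_dist
    by (simp add: g_def dist_norm)
  then have "x = c" using card_pos by (simp add: mult_le_0_iff)
  then show ?thesis using that p nearest c_balanced by blast
qed

lemma unit_orthogonal_to_zero_sum:
  fixes w :: "'b \<Rightarrow> 'a::euclidean_space"
  assumes "finite V" "card V \<le> DIM('a)" "(\<Sum>v\<in>V. w v) = 0"
  obtains u where "norm u = 1" "\<And>v. v \<in> V \<Longrightarrow> w v \<bullet> u = 0"
proof (cases "V = {}")
  case True
  then show ?thesis using that[of "SOME b. b \<in> Basis"] by (simp add: some_in_eq)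
next
  case False
  then obtain v0 where v0: "v0 \<in> V" by blast
  define S where "S = w ` (V - {v0})"
  have "dim S \<le> card (V - {v0})"
    unfolding S_def using assms(1)
    by (intro order.trans[OF dim_le_card[OF span_superset]]) (auto intro: card_image_le)
  also have "\<dots> < DIM('a)"
    using assms(1,2) v0 card_gt_0_iff[of V] by auto
  finally obtain u0 where u0: "u0 \<noteq> 0" "\<And>y. y \<in> span S \<Longrightarrow> orthogonal u0 y"
    using orthogonal_to_subspace_exists by blast
  have "w v0 = - (\<Sum>v\<in>V - {v0}. w v)"
    using assms(3) sum.remove[OF assms(1) v0, of w] by (simp add: eq_neg_iff_add_eq_0)
  then have "w v0 \<in> span S"
    unfolding S_def by (metis span_neg span_sum span_base imageI)
  then have "w v \<in> span S" if "v \<in> V" for v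
    using that by (cases "v = v0") (auto simp: S_def intro: span_base)
  then have "w v \<bullet> u0 = 0" if "v \<in> V" for v
    using u0 that by (metis orthogonal_def inner_commute)
  then show ?thesis using that[of "u0 /\<^sub>R norm u0"] u0 by simp
qed

lemma proj_hyp_translation:
  "proj_hyp u ((\<lambda>x. x - a) ` S) = (\<lambda>y. y - (a - (a \<bullet> u) *\<^sub>R u)) ` proj_hyp u S"
  unfolding proj_hyp_def image_image by (intro image_cong refl) (simp add: inner_diff_left algebra_simps)

lemma translate_proj_hyp_subset_imp_mem:
  assumes "(\<lambda>x. t + x) ` proj_hyp u Q \<subseteq> proj_hyp u L" "v \<in> Q"
  shows "t \<in> proj_hyp u ((\<lambda>y. y - v) ` L)"
proof -
  have "t + (v - (v \<bullet> u) *\<^sub>R u) \<in> (\<lambda>x. t + x) ` proj_hyp u Q"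
    using assms(2) unfolding proj_hyp_def by (intro imageI)
  with assms(1) have "t + (v - (v \<bullet> u) *\<^sub>R u) \<in> proj_hyp u L" by (rule subsetD)
  then show ?thesis unfolding proj_hyp_translation by (rule rev_image_eqI) simp
qed

lemma common_point_if_projections_meet:
  fixes A :: "'b \<Rightarrow> 'a::euclidean_space set"
  assumes "finite V" "card V \<le> DIM('a)"
    and compact: "\<And>v. v \<in> V \<Longrightarrow> compact (A v)" and convex: "\<And>v. v \<in> V \<Longrightarrow> convex (A v)"
    and proj_meet: "\<And>u. norm u = 1 \<Longrightarrow> \<exists>t. \<forall>v\<in>V. t \<in> proj_hyp u (A v)"
  shows "\<exists>x. \<forall>v\<in>V. x \<in> A v"
proof (rule ccontr)
  assume no_common: "\<not> ?thesis"
  then have "V \<noteq> {}" by blast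
  have nonempty: "A v \<noteq> {}" if "v \<in> V" for v
  proof -
    obtain b :: 'a where "b \<in> Basis" using nonempty_Basis by blast
    with proj_meet[of b] that show ?thesis by (auto simp: proj_hyp_def)
  qed
  obtain x p where p: "\<And>v. v \<in> V \<Longrightarrow> p v \<in> A v"
    and nearest: "\<And>v y. v \<in> V \<Longrightarrow> y \<in> A v \<Longrightarrow> dist x (p v) \<le> dist x y"
    and balanced: "(\<Sum>v\<in>V. x - p v) = 0"
    by (rule nearest_points_balanced[of V A]) (use assms(1) \<open>V \<noteq> {}\<close> compact nonempty in auto)
  define w where "w v = x - p v" for v
  have supporting: "w v \<bullet> y \<le> w v \<bullet> p v" if "v \<in> V" "y \<in> A v" for v y
    using any_closest_point_dot[of "A v" "p v" y x] that compact convex p nearest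
    by (simp add: w_def compact_imp_closed inner_diff_right)
  have w_balanced: "(\<Sum>v\<in>V. w v) = 0" using balanced by (simp add: w_def)
  obtain v1 where "v1 \<in> V" "w v1 \<noteq> 0"
  proof -
    have "\<not> (\<forall>v\<in>V. x \<in> A v)" using no_common by blast
    then show ?thesis using that p unfolding w_def by fastforce
  qed
  then have "(\<Sum>v\<in>V. w v \<bullet> w v) > 0"
    by (intro sum_pos2[OF assms(1) \<open>v1 \<in> V\<close>]) auto
  obtain u where "norm u = 1" and orth: "\<And>v. v \<in> V \<Longrightarrow> w v \<bullet> u = 0"
    using unit_orthogonal_to_zero_sum[OF assms(1,2) w_balanced] by blast
  then obtain t where "\<forall>v\<in>V. t \<in> proj_hyp u (A v)" using proj_meet by blast
  then have "\<forall>v\<in>V. \<exists>y. y \<in> A v \<and> t = y - (y \<bullet> u) *\<^sub>R u"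
    unfolding proj_hyp_def by blast
  then obtain y where y: "\<And>v. v \<in> V \<Longrightarrow> y v \<in> A v \<and> t = y v - (y v \<bullet> u) *\<^sub>R u"
    by (metis bchoice)
  have "0 = (\<Sum>v\<in>V. w v \<bullet> t)"
    using w_balanced by (simp add: inner_sum_left[symmetric])
  also have "\<dots> = (\<Sum>v\<in>V. w v \<bullet> y v)"
    using y orth by (intro sum.cong refl) (simp add: inner_diff_right)
  also have "\<dots> \<le> (\<Sum>v\<in>V. w v \<bullet> p v)"
    using supporting y by (intro sum_mono) auto
  also have "\<dots> = (\<Sum>v\<in>V. w v) \<bullet> x - (\<Sum>v\<in>V. w v \<bullet> w v)"
    unfolding inner_sum_left sum_subtractf[symmetric]
    by (intro sum.cong refl) (simp add: w_def inner_diff_right)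
  also have "\<dots> < 0"
    using w_balanced \<open>(\<Sum>v\<in>V. w v \<bullet> w v) > 0\<close> by simp
  finally show False by simp
qed

theorem lemma2p5:
  fixes L Q :: "'a::euclidean_space set"
  assumes "compact L" and "convex L"
    and "polytope Q"
    and "card {v. v extreme_point_of Q} \<le> DIM('a)"
    and "\<And>u. norm u = 1 \<Longrightarrow> \<exists>t. (\<lambda>x. t + x) ` proj_hyp u Q \<subseteq> proj_hyp u L"
  shows "\<exists>t. (\<lambda>x. t + x) ` Q \<subseteq> L"
proof -
  define V where "V = {v. v extreme_point_of Q}"
  have Q_hull: "Q = convex hull V"
    unfolding V_def using assms(3) by (intro Krein_Milman_Minkowski polytope_imp_compact polytope_imp_convex)
  have "finite V"
    unfolding V_def using assms(3) by (intro finite_polyhedron_extreme_points polytope_imp_polyhedron)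
  have "V \<subseteq> Q" unfolding Q_hull by (rule hull_subset)
  have "card V \<le> DIM('a)" using assms(4) by (simp add: V_def)
  have "\<exists>x. \<forall>v\<in>V. x \<in> (\<lambda>y. y - v) ` L"
  proof (rule common_point_if_projections_meet[OF \<open>finite V\<close> \<open>card V \<le> DIM('a)\<close>])
    show "compact ((\<lambda>y. y - v) ` L)" "convex ((\<lambda>y. y - v) ` L)" for v
      using assms(1,2) by (simp_all add: compact_translation_subtract convex_translation_subtract)
    fix u :: 'a
    assume "norm u = 1"
    then obtain t where "(\<lambda>x. t + x) ` proj_hyp u Q \<subseteq> proj_hyp u L"
      using assms(5) by blast
    then show "\<exists>t. \<forall>v\<in>V. t \<in> proj_hyp u ((\<lambda>y. y - v) ` L)"
      using \<open>V \<subseteq> Q\<close> translate_proj_hyp_subset_imp_mem by (metis subsetD)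
  qed
  then obtain x where x: "\<forall>v\<in>V. x \<in> (\<lambda>y. y - v) ` L" by blast
  have "x + v \<in> L" if "v \<in> V" for v
    using x that by force
  then have "convex hull ((\<lambda>v. x + v) ` V) \<subseteq> L"
    using assms(2) by (intro hull_minimal) auto
  then show ?thesis unfolding Q_hull convex_hull_translation by blast
qed

end
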